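(* Let $E\in M_n(\mathbb{FT})$ be an idempotent of rank $n$ and let $H_E$ be its $\mathcal H$-class in $M_n(\mathbb{FT})$. Then there exists $x\in C(E)$ which is an eigenvector of every $A\in H_E$, i.e. for every $A\in H_E$ there is $\lambda\in\mathbb{R}$ with $A\otimes x=\lambda\otimes x$.
   Context: $\mathbb{FT}$ is $\mathbb{R}$ with $a\oplus b=\max(a,b)$, $a\otimes b=a+b$; $M_n(\mathbb{FT})$ is the semigroup of real $n\times n$ matrices under $(A\otimes B)_{i,j}=\max_k(A_{i,k}+B_{k,j})$, acting on $\mathbb{FT}^n$ similarly; $(\lambda\otimes x)_i=\lambda+x_i$. $C(E)$ is the set of finite componentwise maxima of columns of $E$ shifted by real constants; the rank of an idempotent $E$ is the minimal cardinality of a generating set of $C(E)$. Green's relations: $a\,\mathcal{R}\,b$ iff $aS^1=bS^1$, $a\,\mathcal{L}\,b$ iff $S^1a=S^1b$, $\mathcal{H}=\mathcal{L}\cap\mathcal{R}$. *)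

theory Defs
  imports Complex_Main
begin

text \<open>Tropical (max-plus) matrices of size n x n over the reals; the dimension n is
  the cardinality of the finite index type 'n.\<close>

type_synonym 'n tmat = "'n \<Rightarrow> 'n \<Rightarrow> real"
type_synonym 'n tvec = "'n \<Rightarrow> real"

definition tmult :: "('n::finite) tmat \<Rightarrow> 'n tmat \<Rightarrow> 'n tmat" where
  "tmult A B = (\<lambda>i j. Max (range (\<lambda>k. A i k + B k j)))"

definition tapply :: "('n::finite) tmat \<Rightarrow> 'n tvec \<Rightarrow> 'n tvec" where
  "tapply A x = (\<lambda>i. Max (range (\<lambda>k. A i k + x k)))"

definition tscal :: "real \<Rightarrow> 'n tvec \<Rightarrow> 'n tvec" where
  "tscal l x = (\<lambda>i. l + x i)"

definition tspan :: "('n tvec) set \<Rightarrow> ('n tvec) set" where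
  "tspan G = {x. \<exists>S c. finite S \<and> S \<noteq> {} \<and> S \<subseteq> G \<and>
                  x = (\<lambda>i. Max ((\<lambda>v. c v + v i) ` S))}"

definition colspace :: "('n::finite) tmat \<Rightarrow> ('n tvec) set" where
  "colspace E = tspan {(\<lambda>i. E i j) | j. True}"

definition trank :: "('n::finite) tmat \<Rightarrow> nat" where
  "trank E = (LEAST k. \<exists>G. finite G \<and> card G = k \<and> tspan G = colspace E)"

text \<open>Green's relations in the semigroup M_n(FT) (S^1 = S with an identity adjoined).\<close>
definition green_R :: "('n::finite) tmat \<Rightarrow> 'n tmat \<Rightarrow> bool" where
  "green_R A B \<longleftrightarrow> insert A (range (tmult A)) = insert B (range (tmult B))"

definition green_L :: "('n::finite) tmat \<Rightarrow> 'n tmat \<Rightarrow> bool" where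
  "green_L A B \<longleftrightarrow> insert A (range (\<lambda>X. tmult X A)) = insert B (range (\<lambda>X. tmult X B))"

definition green_H :: "('n::finite) tmat \<Rightarrow> 'n tmat \<Rightarrow> bool" where
  "green_H A B \<longleftrightarrow> green_L A B \<and> green_R A B"

end

theory Submission
  imports Defs
begin

text \<open>Full rank makes the columns of E tropically independent: no column is a combination of
  the others. This forces E to have zero diagonal with E k j + E j k < 0 for k \<noteq> j, and it
  makes each column extremal among E-fixed vectors. If A is \<H>-related to E, with group inverse
  B, then A = AE, and comparing the columns of E = BA with the columns of B shows that every
  column of A is a shifted column of E: A i k = \<lambda> k + E i (\<sigma> k), where \<sigma> is a permutation with
  E (\<sigma> k) (\<sigma> j) = E k j + \<lambda> k - \<lambda> j. Taking c j to be minus the mean of column j of E, this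
  identity gives \<lambda> j + c j = \<mu> + c (\<sigma> j) with \<mu> the mean of \<lambda>, and hence
  A \<otimes> (E \<otimes> c) = A \<otimes> c = \<mu> \<otimes> (E \<otimes> c).\<close>

lemma Max_range_ge: "(f::'a::finite \<Rightarrow> 'b::linorder) k \<le> Max (range f)"
  by (rule Max_ge) auto

lemma Max_range_attained: "\<exists>k. Max (range (f::'a::finite \<Rightarrow> 'b::linorder)) = f k"
proof -
  have "Max (range f) \<in> range f" by (rule Max_in) auto
  then show ?thesis by (metis rangeE)
qed

lemma Max_range_le_iff: "Max (range (f::'a::finite \<Rightarrow> 'b::linorder)) \<le> y \<longleftrightarrow> (\<forall>k. f k \<le> y)"
  by (subst Max_le_iff) auto

lemma Max_image_add_left:
  fixes f :: "'a \<Rightarrow> 'b::linordered_ab_semigroup_add"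
  assumes "finite S" and "S \<noteq> {}"
  shows "Max ((\<lambda>x. c + f x) ` S) = c + Max (f ` S)"
  using Max_add_commute[OF assms, of f c] by (simp add: add.commute)

lemma Max_range_add_left:
  "Max (range (\<lambda>k. c + (f::'a::finite \<Rightarrow> 'b::linordered_ab_semigroup_add) k)) = c + Max (range f)"
  by (rule Max_image_add_left) auto

lemma Max_image_swap:
  fixes g :: "'a \<Rightarrow> 'b \<Rightarrow> 'c::linorder"
  assumes "finite A" "A \<noteq> {}" "finite B" "B \<noteq> {}"
  shows "Max ((\<lambda>a. Max (g a ` B)) ` A) = Max ((\<lambda>b. Max ((\<lambda>a. g a b) ` A)) ` B)"
proof -
  have le: "Max ((\<lambda>a. Max (h a ` Y)) ` X) \<le> Max ((\<lambda>b. Max ((\<lambda>a. h a b) ` X)) ` Y)"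
    if "finite X" "X \<noteq> {}" "finite Y" "Y \<noteq> {}" for X Y and h :: "'x \<Rightarrow> 'y \<Rightarrow> 'c"
  proof -
    have "h a b \<le> Max ((\<lambda>b. Max ((\<lambda>a. h a b) ` X)) ` Y)" if "a \<in> X" "b \<in> Y" for a b
      using \<open>finite X\<close> \<open>finite Y\<close> that
      by (meson Max_ge finite_imageI imageI order_trans)
    then show ?thesis using that by (simp add: Max_le_iff)
  qed
  show ?thesis
    using le[OF assms, of g] le[OF assms(3,4,1,2), of "\<lambda>b a. g a b"] by (rule antisym)
qed

lemma tmult_assoc: "tmult (tmult A B) C = tmult A (tmult (B::('n::finite) tmat) C)"
proof (intro ext)
  fix i j
  have "tmult (tmult A B) C i j = Max (range (\<lambda>l. Max (range (\<lambda>k. A i k + B k l + C l j))))"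
    unfolding tmult_def by (simp add: Max_range_add_left[symmetric] ac_simps)
  also have "\<dots> = Max (range (\<lambda>k. Max (range (\<lambda>l. A i k + B k l + C l j))))"
    by (rule Max_image_swap[symmetric]) auto
  also have "\<dots> = tmult A (tmult B C) i j"
    unfolding tmult_def by (simp add: Max_range_add_left[symmetric] ac_simps)
  finally show "tmult (tmult A B) C i j = tmult A (tmult B C) i j" .
qed

lemma tapply_tapply: "tapply A (tapply B x) = tapply (tmult A (B::('n::finite) tmat)) x"
proof (intro ext)
  fix i
  have "tapply A (tapply B x) i = Max (range (\<lambda>k. Max (range (\<lambda>j. A i k + B k j + x j))))"
    unfolding tapply_def by (simp add: Max_range_add_left[symmetric] ac_simps)
  also have "\<dots> = Max (range (\<lambda>j. Max (range (\<lambda>k. A i k + B k j + x j))))"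
    by (rule Max_image_swap) auto
  also have "\<dots> = tapply (tmult A B) x i"
    unfolding tapply_def tmult_def by (simp add: Max_range_add_left[symmetric] ac_simps)
  finally show "tapply A (tapply B x) i = tapply (tmult A B) x i" .
qed

lemma tmult_eqD: "tmult A B = C \<Longrightarrow> C i j = Max (range (\<lambda>k. A i k + B k (j::'n::finite)))"
  unfolding tmult_def by (auto dest: fun_cong)

lemma tmult_eq_ge: "tmult A B = C \<Longrightarrow> A i k + B k j \<le> C i (j::'n::finite)"
  using tmult_eqD[of A B C i j] Max_range_ge[of "\<lambda>k. A i k + B k j" k] by simp

lemma tapply_Max_combination:
  fixes A :: "('n::finite) tmat"
  assumes "finite S" and "S \<noteq> {}"
  shows "tapply A (\<lambda>i. Max ((\<lambda>v. c v + v i) ` S)) = (\<lambda>i. Max ((\<lambda>v. c v + tapply A v i) ` S))"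
proof (intro ext)
  fix i
  have "tapply A (\<lambda>i. Max ((\<lambda>v. c v + v i) ` S)) i
      = Max (range (\<lambda>k. Max ((\<lambda>v. c v + (A i k + v k)) ` S)))"
    unfolding tapply_def using assms by (simp add: Max_image_add_left[symmetric] ac_simps)
  also have "\<dots> = Max ((\<lambda>v. Max (range (\<lambda>k. c v + (A i k + v k)))) ` S)"
    using assms by (intro Max_image_swap) auto
  also have "\<dots> = Max ((\<lambda>v. c v + tapply A v i) ` S)"
    unfolding tapply_def by (simp add: Max_range_add_left)
  finally show "tapply A (\<lambda>i. Max ((\<lambda>v. c v + v i) ` S)) i = Max ((\<lambda>v. c v + tapply A v i) ` S)" .
qed

lemma colspace_fixed:
  fixes E :: "('n::finite) tmat"
  assumes idem: "tmult E E = E" and x: "x \<in> colspace E"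
  shows "tapply E x = x"
proof -
  obtain S c where S: "finite S" "S \<noteq> {}" "S \<subseteq> {(\<lambda>i. E i j) | j. True}"
    and x_eq: "x = (\<lambda>i. Max ((\<lambda>v. c v + v i) ` S))"
    using x unfolding colspace_def tspan_def by blast
  have "tapply E v = v" if "v \<in> S" for v
  proof -
    obtain j where "v = (\<lambda>i. E i j)" using S(3) \<open>v \<in> S\<close> by auto
    then show ?thesis by (simp add: tapply_def tmult_eqD[OF idem, symmetric])
  qed
  then have "(\<lambda>v. c v + tapply E v i) ` S = (\<lambda>v. c v + v i) ` S" for i
    by (intro image_cong) auto
  then show ?thesis by (simp add: x_eq tapply_Max_combination[OF S(1,2)])
qed

lemma tspan_mono: "G \<subseteq> G' \<Longrightarrow> tspan G \<subseteq> tspan G'"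
  unfolding tspan_def by blast

text \<open>Vectors f k repeated in the family are merged by keeping their largest coefficient.\<close>

lemma tspan_image_Max:
  fixes f :: "'k \<Rightarrow> 'n tvec"
  assumes fin: "finite K" and ne: "K \<noteq> {}"
  shows "(\<lambda>i. Max ((\<lambda>k. c k + f k i) ` K)) \<in> tspan (f ` K)"
proof -
  define cf where "cf v = Max (c ` {k\<in>K. f k = v})" for v
  have Max_eq: "Max ((\<lambda>k. c k + f k i) ` K) = Max ((\<lambda>v. cf v + v i) ` (f ` K))" for i
  proof (rule antisym)
    have "c k + f k i \<le> Max ((\<lambda>v. cf v + v i) ` (f ` K))" if "k \<in> K" for k
    proof -
      have "c k \<le> cf (f k)"
        unfolding cf_def using fin that by (intro Max_ge) auto
      moreover have "cf (f k) + f k i \<le> Max ((\<lambda>v. cf v + v i) ` (f ` K))"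
        using fin that by (intro Max_ge) auto
      ultimately show ?thesis by linarith
    qed
    then show "Max ((\<lambda>k. c k + f k i) ` K) \<le> Max ((\<lambda>v. cf v + v i) ` (f ` K))"
      using fin ne by (subst Max_le_iff) auto
  next
    have "cf v + v i \<le> Max ((\<lambda>k. c k + f k i) ` K)" if "v \<in> f ` K" for v
    proof -
      have "cf v \<in> c ` {k\<in>K. f k = v}"
        unfolding cf_def using fin that by (intro Max_in) auto
      then obtain k where "k \<in> K" "f k = v" "cf v = c k" by auto
      then show ?thesis using fin by (auto intro: Max_ge)
    qed
    then show "Max ((\<lambda>v. cf v + v i) ` (f ` K)) \<le> Max ((\<lambda>k. c k + f k i) ` K)"
      using fin ne by (subst Max_le_iff) auto
  qed
  show ?thesis unfolding tspan_def
    using fin ne Max_eq by (intro CollectI exI[of _ "f ` K"] exI[of _ cf]) auto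
qed

lemma tapply_in_colspace: "tapply E c \<in> colspace (E::('n::finite) tmat)"
proof -
  have "(\<lambda>i. Max ((\<lambda>k. c k + E i k) ` UNIV)) \<in> tspan ((\<lambda>k i. E i k) ` UNIV)"
    by (rule tspan_image_Max) auto
  moreover have "(\<lambda>k i. E i k) ` UNIV = {(\<lambda>i. E i j) | j. True}" by auto
  ultimately show ?thesis unfolding colspace_def tapply_def by (simp add: add.commute)
qed

lemma trank_le_card:
  assumes "finite G" and "tspan G = colspace E"
  shows "trank E \<le> card G"
  unfolding trank_def by (rule Least_le) (use assms in blast)

text \<open>The hypotheses say that column j is the combination of the other columns with
  coefficients d; then it is redundant in every element of C(E), since these are fixed by E.\<close>

lemma colspace_eq_tspan_other_columns:
  fixes E :: "('n::finite) tmat"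
  assumes idem: "tmult E E = E"
    and cover: "\<And>i. \<exists>k. k \<noteq> j \<and> E i j \<le> E i k + d k"
    and below: "\<And>k. d k \<le> E k j"
  shows "colspace E = tspan ((\<lambda>k i. E i k) ` (UNIV - {j}))"
proof
  define K where "K = UNIV - {j}"
  show "tspan ((\<lambda>k i. E i k) ` K) \<subseteq> colspace E"
    unfolding colspace_def by (rule tspan_mono) blast
  show "colspace E \<subseteq> tspan ((\<lambda>k i. E i k) ` K)"
  proof
    fix x assume "x \<in> colspace E"
    then have x_fixed: "x i = Max (range (\<lambda>k. E i k + x k))" for i
      using fun_cong[OF colspace_fixed[OF idem], of x i] unfolding tapply_def by simp
    have K_ne: "K \<noteq> {}" using cover unfolding K_def by blast
    have "x i = Max ((\<lambda>k. x k + E i k) ` K)" for i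
    proof (rule antisym)
      have "E i k + x k \<le> Max ((\<lambda>k. x k + E i k) ` K)" for k
      proof (cases "k = j")
        case True
        obtain k' where k': "k' \<noteq> j" "E i j \<le> E i k' + d k'" using cover by blast
        have "E k' j + x j \<le> x k'"
          using x_fixed[of k'] Max_range_ge[of "\<lambda>m. E k' m + x m" j] by simp
        then have "E i k + x k \<le> x k' + E i k'" unfolding True using k'(2) below[of k'] by linarith
        also have "\<dots> \<le> Max ((\<lambda>k. x k + E i k) ` K)" using k'(1) unfolding K_def by (intro Max_ge) auto
        finally show ?thesis .
      next
        case False
        then show ?thesis unfolding K_def by (subst add.commute) (intro Max_ge, auto)
      qed
      then show "x i \<le> Max ((\<lambda>k. x k + E i k) ` K)"
        by (subst x_fixed) (simp add: Max_range_le_iff)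
      show "Max ((\<lambda>k. x k + E i k) ` K) \<le> x i"
        using K_ne x_fixed[of i] Max_range_ge[of "\<lambda>k. E i k + x k"] by (simp add: add.commute)
    qed
    then have "x = (\<lambda>i. Max ((\<lambda>k. x k + E i k) ` K))" by (intro ext)
    also have "\<dots> \<in> tspan ((\<lambda>k i. E i k) ` K)"
      using K_ne by (intro tspan_image_Max) simp
    finally show "x \<in> tspan ((\<lambda>k i. E i k) ` K)" .
  qed
qed

locale full_rank_idem =
  fixes E :: "('n::finite) tmat"
  assumes idem: "tmult E E = E"
    and full_rank: "trank E = card (UNIV :: 'n set)"
begin

lemma column_irredundant:
  assumes cover: "\<And>i. \<exists>k. k \<noteq> j \<and> E i j \<le> E i k + d k"
    and below: "\<And>k. d k \<le> E k j"
  shows False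
proof -
  have "trank E \<le> card ((\<lambda>k i. E i k) ` (UNIV - {j}))"
    using colspace_eq_tspan_other_columns[OF idem cover below] by (intro trank_le_card) auto
  also have "\<dots> \<le> card (UNIV - {j})" by (rule card_image_le) simp
  also have "\<dots> < card (UNIV :: 'n set)" by (simp add: card_Diff_singleton card_gt_0_iff)
  finally show False using full_rank by simp
qed

lemma diag_zero: "E j j = 0"
proof (rule ccontr)
  assume "E j j \<noteq> 0"
  moreover have "E j j + E j j \<le> E j j" by (rule tmult_eq_ge[OF idem])
  ultimately have neg: "E j j < 0" by simp
  have "\<exists>k. k \<noteq> j \<and> E i j \<le> E i k + E k j" for i
  proof -
    obtain k where k: "E i j = E i k + E k j"
      using tmult_eqD[OF idem, of i j] Max_range_attained by metis
    with neg show ?thesis by (intro exI[of _ k]) auto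
  qed
  then show False by (rule column_irredundant) simp
qed

lemma cycle_neg:
  assumes "k \<noteq> j"
  shows "E k j + E j k < 0"
proof (rule ccontr)
  assume nonneg: "\<not> E k j + E j k < 0"
  have "\<exists>k'. k' \<noteq> j \<and> E i j \<le> E i k' + E k' j" for i
  proof -
    have "E i j + E j k \<le> E i k" by (rule tmult_eq_ge[OF idem])
    with nonneg assms show ?thesis by (intro exI[of _ k]) auto
  qed
  then show False by (rule column_irredundant) simp
qed

lemma column_extremal:
  fixes w :: "'m::finite \<Rightarrow> 'n tvec"
  assumes fixed: "\<And>m. tapply E (w m) = w m"
    and below: "\<And>m i. w m i \<le> E i j"
    and cover: "\<And>i. \<exists>m. E i j \<le> w m i"
  shows "\<exists>m. w m = (\<lambda>i. E i j)"
proof -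
  have w_eq: "w m i = Max (range (\<lambda>k. E i k + w m k))" for m i
    using fun_cong[OF fixed[of m], of i] unfolding tapply_def by simp
  show ?thesis
  proof (cases "\<exists>m. w m j \<ge> 0")
    case True
    then obtain m where m: "w m j \<ge> 0" by blast
    have "E i j \<le> w m i" for i
      using w_eq[of m i] Max_range_ge[of "\<lambda>k. E i k + w m k" j] m by linarith
    then show ?thesis using below by (intro exI[of _ m] ext antisym)
  next
    case False
    \<comment> \<open>Now every maximum w m i = max_k (E i k + w m k) is attained off j.\<close>
    define d where "d k = Max (range (\<lambda>m. w m k))" for k
    have "\<exists>k. k \<noteq> j \<and> E i j \<le> E i k + d k" for i
    proof -
      obtain m where m: "E i j \<le> w m i" using cover by blast
      obtain k where k: "w m i = E i k + w m k" using w_eq Max_range_attained by metis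
      have "w m k \<le> d k" unfolding d_def by (rule Max_range_ge)
      moreover have "k \<noteq> j" using m k False by force
      ultimately show ?thesis using m k by (intro exI[of _ k]) auto
    qed
    moreover have "d k \<le> E k j" for k unfolding d_def Max_range_le_iff using below by simp
    ultimately have False by (rule column_irredundant)
    then show ?thesis ..
  qed
qed

end

lemma green_H_idem_unit:
  fixes A E :: "('n::finite) tmat"
  assumes idem: "tmult E E = E" and H: "green_H A E"
  shows "tmult E A = A" and "tmult A E = A"
proof -
  have "A \<in> insert E (range (tmult E))" and "A \<in> insert E (range (\<lambda>X. tmult X E))"
    using H unfolding green_H_def green_R_def green_L_def by blast+
  then obtain X Y where X: "A = tmult E X" and Y: "A = tmult Y E"
    using idem by (metis image_iff insert_iff)
  show "tmult E A = A" unfolding X by (simp add: tmult_assoc[symmetric] idem)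
  show "tmult A E = A" unfolding Y by (simp add: tmult_assoc idem)
qed

lemma green_H_idem_inverse:
  fixes A E :: "('n::finite) tmat"
  assumes idem: "tmult E E = E" and H: "green_H A E"
  obtains B where "tmult A B = E" "tmult B A = E" "tmult E B = B" "tmult B E = B"
proof -
  note EA = green_H_idem_unit(1)[OF idem H] and AE = green_H_idem_unit(2)[OF idem H]
  have "E \<in> insert A (range (tmult A))" and "E \<in> insert A (range (\<lambda>X. tmult X A))"
    using H unfolding green_H_def green_R_def green_L_def by blast+
  then obtain X Y where X: "tmult A X = E" and Y: "tmult Y A = E"
    using AE EA by (metis image_iff insert_iff)
  define B where "B = tmult E (tmult X E)"
  define B' where "B' = tmult E (tmult Y E)"
  have AB: "tmult A B = E" unfolding B_def by (metis tmult_assoc AE X idem)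
  have B'A: "tmult B' A = E" unfolding B'_def by (metis tmult_assoc EA Y idem)
  \<comment> \<open>A left inverse B' and a right inverse B of A in the monoid with unit E coincide.\<close>
  have "B' = tmult (tmult B' A) B"
    using AB by (simp add: B'_def tmult_assoc idem)
  also have "\<dots> = B" unfolding B'A B_def by (simp add: tmult_assoc[symmetric] idem)
  finally have "tmult B A = E" using B'A by simp
  moreover have "tmult E B = B" unfolding B_def by (simp add: tmult_assoc[symmetric] idem)
  moreover have "tmult B E = B" unfolding B_def by (simp add: tmult_assoc idem)
  ultimately show ?thesis using AB that by blast
qed

context full_rank_idem
begin

lemma green_H_column_shift:
  assumes H: "green_H A E"
  shows "\<exists>l. \<forall>i. A i k = A l k + E i l"
proof -
  obtain B where AB: "tmult A B = E" and BA: "tmult B A = E" and EB: "tmult E B = B"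
    using green_H_idem_inverse[OF idem H] by blast
  have AE: "tmult A E = A" using green_H_idem_unit(2)[OF idem H] .
  \<comment> \<open>Columns of B shifted by the entries of column k of A; as BA = E they lie below
    column k of E and cover it, so by extremality one of them is that column.\<close>
  define w where "w l = (\<lambda>i. A l k + B i l)" for l
  have "tapply E (w l) = w l" for l
  proof (intro ext)
    fix i
    have "tapply E (w l) i = Max (range (\<lambda>m. A l k + (E i m + B m l)))"
      unfolding tapply_def w_def by (simp only: add.left_commute)
    also have "\<dots> = A l k + Max (range (\<lambda>m. E i m + B m l))"
      by (rule Max_range_add_left)
    also have "\<dots> = w l i" unfolding w_def by (simp add: tmult_eqD[OF EB, symmetric])
    finally show "tapply E (w l) i = w l i" .
  qed
  moreover have "w l i \<le> E i k" for l i
    unfolding w_def using tmult_eq_ge[OF BA] by (simp add: add.commute)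
  moreover have "\<exists>l. E i k \<le> w l i" for i
  proof -
    obtain l where "E i k = B i l + A l k" using tmult_eqD[OF BA, of i k] Max_range_attained by metis
    then show ?thesis unfolding w_def by (intro exI[of _ l]) simp
  qed
  ultimately have "\<exists>l. w l = (\<lambda>i. E i k)" by (rule column_extremal)
  then obtain l where l: "w l = (\<lambda>i. E i k)" ..
  then have E_col: "E m k = A l k + B m l" for m using fun_cong[OF l, of m] unfolding w_def by simp
  have "A i k = A l k + E i l" for i
  proof -
    have "A i k = Max (range (\<lambda>m. A i m + E m k))" by (rule tmult_eqD[OF AE])
    also have "\<dots> = Max (range (\<lambda>m. A l k + (A i m + B m l)))"
      by (simp only: E_col add.left_commute)
    also have "\<dots> = A l k + E i l"
      by (simp add: Max_range_add_left tmult_eqD[OF AB, symmetric])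
    finally show ?thesis .
  qed
  then show ?thesis by blast
qed

lemma green_H_columns_shifted:
  assumes "green_H A E"
  obtains \<sigma> lam where "\<And>i k. A i k = lam k + E i (\<sigma> k)"
proof -
  have "\<forall>k. \<exists>l. \<forall>i. A i k = A l k + E i l" using green_H_column_shift[OF assms] by blast
  then obtain \<sigma> where "\<And>k i. A i k = A (\<sigma> k) k + E i (\<sigma> k)" by metis
  then show ?thesis by (rule that)
qed

lemma green_H_shift_conj:
  assumes H: "green_H A E" and shift: "\<And>i k. A i k = lam k + E i (\<sigma> k)"
  shows "E (\<sigma> k) (\<sigma> j) = E k j + lam k - lam j"
proof -
  obtain B where BA: "tmult B A = E" and BE: "tmult B E = B"
    using green_H_idem_inverse[OF idem H] by blast
  have AE: "tmult A E = A" using green_H_idem_unit(2)[OF idem H] .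
  have B_col: "B k (\<sigma> j) = E k j - lam j" for k j
  proof -
    have "E k j = Max (range (\<lambda>m. B k m + A m j))" by (rule tmult_eqD[OF BA])
    also have "\<dots> = Max (range (\<lambda>m. lam j + (B k m + E m (\<sigma> j))))"
      by (simp add: shift ac_simps)
    also have "\<dots> = lam j + B k (\<sigma> j)"
      by (simp add: Max_range_add_left tmult_eqD[OF BE, symmetric])
    finally show ?thesis by simp
  qed
  show ?thesis
  proof (rule antisym)
    have "B k (\<sigma> k) + A (\<sigma> k) j \<le> E k j" by (rule tmult_eq_ge[OF BA])
    then show "E (\<sigma> k) (\<sigma> j) \<le> E k j + lam k - lam j"
      using B_col[of k k] shift[of "\<sigma> k" j] diag_zero by simp
    have "A (\<sigma> k) k + E k j \<le> A (\<sigma> k) j" by (rule tmult_eq_ge[OF AE])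
    then show "E k j + lam k - lam j \<le> E (\<sigma> k) (\<sigma> j)"
      using shift[of "\<sigma> k" k] shift[of "\<sigma> k" j] diag_zero by simp
  qed
qed

lemma shift_conj_inj:
  assumes conj: "\<And>k j. E (\<sigma> k) (\<sigma> j) = E k j + lam k - lam j"
  shows "inj \<sigma>"
proof (rule injI, rule ccontr)
  fix k j assume "\<sigma> k = \<sigma> j" and "k \<noteq> j"
  then have "E k j + E j k = 0" using conj[of k j] conj[of j k] diag_zero by simp
  with cycle_neg[OF \<open>k \<noteq> j\<close>] show False by simp
qed

end

definition neg_column_mean :: "('n::finite) tmat \<Rightarrow> 'n tvec" where
  "neg_column_mean E j = - (\<Sum>i\<in>UNIV. E i j) / real (card (UNIV :: 'n set))"

lemma neg_column_mean_shift:
  fixes E :: "('n::finite) tmat"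
  assumes inj: "inj \<sigma>" and conj: "\<And>k j. E (\<sigma> k) (\<sigma> j) = E k j + lam k - lam j"
  shows "lam j + neg_column_mean E j
    = (\<Sum>k\<in>UNIV. lam k) / real (card (UNIV :: 'n set)) + neg_column_mean E (\<sigma> j)"
proof -
  define n where "n = real (card (UNIV :: 'n set))"
  have "n > 0" unfolding n_def by (simp add: card_gt_0_iff)
  have "(\<Sum>i\<in>UNIV. E i (\<sigma> j)) = (\<Sum>k\<in>UNIV. E (\<sigma> k) (\<sigma> j))"
    using sum.reindex[OF inj, of "\<lambda>i. E i (\<sigma> j)"] inj by (simp add: finite_UNIV_inj_surj)
  also have "\<dots> = (\<Sum>k\<in>UNIV. E k j + lam k - lam j)" by (simp add: conj)
  also have "\<dots> = (\<Sum>k\<in>UNIV. E k j) + (\<Sum>k\<in>UNIV. lam k) - n * lam j"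
    unfolding n_def by (simp add: sum.distrib sum_subtractf)
  finally show ?thesis
    using \<open>n > 0\<close> unfolding neg_column_mean_def n_def[symmetric] by (simp add: field_simps)
qed

lemma tapply_shift_eigenvector:
  fixes A E :: "('n::finite) tmat"
  assumes AE: "tmult A E = A" and inj: "inj \<sigma>"
    and conj: "\<And>k j. E (\<sigma> k) (\<sigma> j) = E k j + lam k - lam j"
    and shift: "\<And>i k. A i k = lam k + E i (\<sigma> k)"
  defines "x \<equiv> tapply E (neg_column_mean E)"
    and "\<mu> \<equiv> (\<Sum>k\<in>UNIV. lam k) / real (card (UNIV :: 'n set))"
  shows "tapply A x = tscal \<mu> x"
proof (intro ext)
  fix i
  let ?c = "neg_column_mean E"
  have "tapply A x i = Max (range (\<lambda>j. A i j + ?c j))"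
    unfolding x_def tapply_tapply AE by (simp add: tapply_def)
  also have "\<dots> = Max (range (\<lambda>j. \<mu> + (E i (\<sigma> j) + ?c (\<sigma> j))))"
  proof -
    have "A i j + ?c j = \<mu> + (E i (\<sigma> j) + ?c (\<sigma> j))" for j
      using shift[of i j] neg_column_mean_shift[of \<sigma> E lam, OF inj conj, of j] unfolding \<mu>_def
      by linarith
    then show ?thesis by simp
  qed
  also have "\<dots> = \<mu> + Max (range (\<lambda>m. E i m + ?c m))"
    using image_image[of "\<lambda>m. E i m + ?c m" \<sigma> UNIV] inj
    by (simp add: Max_range_add_left finite_UNIV_inj_surj)
  also have "\<dots> = tscal \<mu> x i" unfolding tscal_def x_def tapply_def by simp
  finally show "tapply A x i = tscal \<mu> x i" .
qed

theorem corollary7p9: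
  fixes E :: "('n::finite) tmat"
  assumes "tmult E E = E"
    and "trank E = card (UNIV :: 'n set)"
  shows "\<exists>x \<in> colspace E. \<forall>A. green_H A E \<longrightarrow> (\<exists>l::real. tapply A x = tscal l x)"
proof -
  interpret full_rank_idem E using assms by unfold_locales
  let ?x = "tapply E (neg_column_mean E)"
  have "\<exists>l. tapply A ?x = tscal l ?x" if H: "green_H A E" for A
  proof -
    obtain \<sigma> lam where shift: "\<And>i k. A i k = lam k + E i (\<sigma> k)"
      using green_H_columns_shifted[OF H] by metis
    have conj: "\<And>k j. E (\<sigma> k) (\<sigma> j) = E k j + lam k - lam j"
      using green_H_shift_conj[OF H shift] .
    have "tmult A E = A" using green_H_idem_unit(2)[OF idem H] .
    from tapply_shift_eigenvector[OF this shift_conj_inj[OF conj] conj shift]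
    show ?thesis by blast
  qed
  then show ?thesis using tapply_in_colspace by blast
qed

end
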